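(* (1) For every $\mathbf{x}\in\mathcal{O}$, its code $(i_j)_{j\ge1}$ is the label of an infinite path in the automaton $\mathcal{M}$ starting at state $A$. (2) Conversely, let $(i_j)_{j\ge1}$ be the label of an infinite path in $\mathcal{M}$ starting at $A$. If $(i_j)$ is not eventually $0$, then there is exactly one infinite binary word $\mathbf{x}$ coded by $(i_j)$, and $\mathbf{x}\in\mathcal{O}$. If $(i_j)$ is eventually $0$, say $i_j=0$ for all $j\ge c$, then the infinite words coded by $(i_j)$ are exactly two, one with tail $\mathbf{t}$ (i.e. $\mathbf{y}_{c-1}=\mathbf{t}$) and one with tail $\overline{\mathbf{t}}$, and: if from step $c$ on the path cycles at state $A$ or between states $B$ and $D$, both of these words are in $\mathcal{O}$; if it cycles between $J$ and $K$, exactly the word with tail $\mathbf{t}$ is in $\mathcal{O}$; if it cycles between $G$ and $H$, exactly the word with tail $\overline{\mathbf{t}}$ is in $\mathcal{O}$.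
   Context: $\Sigma=\{0,1\}$. An overlap is a word $axaxa$ with $a\in\Sigma$, $x\in\Sigma^*$; a word is overlap-free if it has no overlap as a factor. $\mathcal{O}$ is the set of right-infinite binary overlap-free words, $\mu$ is the morphism $0\mapsto01$, $1\mapsto10$, $\mathbf{t}=\mu^\omega(0)$, $\overline{\mathbf{t}}=\mu^\omega(1)$. Let $p_0=\epsilon$, $p_1=0$, $p_2=00$, $p_3=1$, $p_4=11$. A sequence $(i_j)_{j\ge1}$ over $\{0,1,2,3,4\}$ codes an infinite binary word $\mathbf{x}$ if there are infinite binary words $\mathbf{y}_0=\mathbf{x},\mathbf{y}_1,\mathbf{y}_2,\dots$ with $\mathbf{y}_{j-1}=p_{i_j}\mu(\mathbf{y}_j)$ for all $j\ge1$. For $\mathbf{x}\in\mathcal{O}$, the code of $\mathbf{x}$ is the unique sequence $(i_j)$ coding $\mathbf{x}$ with all $\mathbf{y}_j\in\mathcal{O}$ (which exists and is unique by the Restivo–Salemi factorization: each $\mathbf{x}\in\mathcal{O}$ is uniquely $p\mu(\mathbf{y})$ with $p\in\{p_0,\dots,p_4\}$, $\mathbf{y}\in\mathcal{O}$). The automaton $\mathcal{M}$ has states $A,B,C,D,E,F,G,H,I,J,K$, input alphabet $\{0,1,2,3,4\}$, and exactly the following transitions: $A\xrightarrow{0}A$, $A\xrightarrow{1}B$, $A\xrightarrow{2}C$, $A\xrightarrow{3}D$, $A\xrightarrow{4}E$; $B\xrightarrow{0}D$, $B\xrightarrow{1}B$, $B\xrightarrow{3}E$; $D\xrightarrow{0}B$,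 $D\xrightarrow{1}C$, $D\xrightarrow{3}D$; $C\xrightarrow{0}F$, $C\xrightarrow{3}E$; $E\xrightarrow{0}I$, $E\xrightarrow{1}C$; $F\xrightarrow{3}G$; $I\xrightarrow{1}J$; $J\xrightarrow{0}K$, $J\xrightarrow{1}B$; $K\xrightarrow{0}J$, $K\xrightarrow{1}C$; $G\xrightarrow{0}H$, $G\xrightarrow{3}D$; $H\xrightarrow{0}G$, $H\xrightarrow{3}E$. *)

theory Defs
  imports Main
begin

text \<open>Binary alphabet: letter 0 is False, letter 1 is True.
  Infinite words are functions nat => bool, finite words are bool lists.\<close>

type_synonym iword = "nat \<Rightarrow> bool"

definition is_overlap :: "bool list \<Rightarrow> bool" where
  "is_overlap u \<longleftrightarrow> (\<exists>a x. u = a # x @ a # x @ [a])"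

definition occurs_at :: "bool list \<Rightarrow> iword \<Rightarrow> nat \<Rightarrow> bool" where
  "occurs_at u w i \<longleftrightarrow> (\<forall>k<length u. w (i + k) = u ! k)"

definition overlap_free :: "iword \<Rightarrow> bool" where
  "overlap_free w \<longleftrightarrow> \<not> (\<exists>u i. is_overlap u \<and> occurs_at u w i)"

definition OF :: "iword set" where
  "OF = {w. overlap_free w}"

definition mu_list :: "bool list \<Rightarrow> bool list" where
  "mu_list w = concat (map (\<lambda>a. [a, \<not> a]) w)"

definition mu :: "iword \<Rightarrow> iword" where
  "mu y n = (if even n then y (n div 2) else \<not> y (n div 2))"

text \<open>mu^omega(a): the n-th letter is the n-th letter of mu^(n+1)(a), which has length 2^(n+1).\<close>

definition mu_omega :: "bool \<Rightarrow> iword" where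
  "mu_omega a n = ((mu_list ^^ Suc n) [a]) ! n"

definition thue :: iword where "thue = mu_omega False"
definition thue_bar :: iword where "thue_bar = mu_omega True"

definition conc :: "bool list \<Rightarrow> iword \<Rightarrow> iword" where
  "conc p y n = (if n < length p then p ! n else y (n - length p))"

fun pref :: "nat \<Rightarrow> bool list" where
  "pref 0 = []"
| "pref (Suc 0) = [False]"
| "pref (Suc (Suc 0)) = [False, False]"
| "pref (Suc (Suc (Suc 0))) = [True]"
| "pref (Suc (Suc (Suc (Suc 0)))) = [True, True]"
| "pref _ = []"

text \<open>Sequences (i_j)_{j>=1} are functions nat => nat; the value at 0 is ignored.
  ys is a witness chain y_0 = x, y_1, y_2, ...\<close>

definition code_chain :: "(nat \<Rightarrow> nat) \<Rightarrow> (nat \<Rightarrow> iword) \<Rightarrow> bool" where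
  "code_chain i ys \<longleftrightarrow> (\<forall>j\<ge>1. ys (j - 1) = conc (pref (i j)) (mu (ys j)))"

definition codes :: "(nat \<Rightarrow> nat) \<Rightarrow> iword \<Rightarrow> bool" where
  "codes i x \<longleftrightarrow> (\<forall>j\<ge>1. i j \<in> {0..4}) \<and> (\<exists>ys. ys 0 = x \<and> code_chain i ys)"

definition is_code_of :: "iword \<Rightarrow> (nat \<Rightarrow> nat) \<Rightarrow> bool" where
  "is_code_of x i \<longleftrightarrow> (\<forall>j\<ge>1. i j \<in> {0..4}) \<and>
     (\<exists>ys. ys 0 = x \<and> code_chain i ys \<and> (\<forall>j. ys j \<in> OF))"

definition codes_with_tail :: "(nat \<Rightarrow> nat) \<Rightarrow> iword \<Rightarrow> nat \<Rightarrow> iword \<Rightarrow> bool" where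
  "codes_with_tail i x m w \<longleftrightarrow> (\<exists>ys. ys 0 = x \<and> code_chain i ys \<and> ys m = w)"

datatype state = A | B | C | D | E | F | G | H | I | J | K

fun delta :: "state \<Rightarrow> nat \<Rightarrow> state option" where
  "delta A 0 = Some A" | "delta A (Suc 0) = Some B" | "delta A (Suc (Suc 0)) = Some C"
| "delta A (Suc (Suc (Suc 0))) = Some D" | "delta A (Suc (Suc (Suc (Suc 0)))) = Some E"
| "delta B 0 = Some D" | "delta B (Suc 0) = Some B" | "delta B (Suc (Suc (Suc 0))) = Some E"
| "delta D 0 = Some B" | "delta D (Suc 0) = Some C" | "delta D (Suc (Suc (Suc 0))) = Some D"
| "delta C 0 = Some F" | "delta C (Suc (Suc (Suc 0))) = Some E"
| "delta E 0 = Some I" | "delta E (Suc 0) = Some C"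
| "delta F (Suc (Suc (Suc 0))) = Some G"
| "delta I (Suc 0) = Some J"
| "delta J 0 = Some K" | "delta J (Suc 0) = Some B"
| "delta K 0 = Some J" | "delta K (Suc 0) = Some C"
| "delta G 0 = Some H" | "delta G (Suc (Suc (Suc 0))) = Some D"
| "delta H 0 = Some G" | "delta H (Suc (Suc (Suc 0))) = Some E"
| "delta _ _ = None"

text \<open>s is the state sequence of an infinite path from A labelled (i_j)_{j>=1}:
  s_0 = A and s_{j-1} --i_j--> s_j.\<close>

definition run_from_A :: "(nat \<Rightarrow> nat) \<Rightarrow> (nat \<Rightarrow> state) \<Rightarrow> bool" where
  "run_from_A i s \<longleftrightarrow> s 0 = A \<and> (\<forall>j. delta (s j) (i (Suc j)) = Some (s (Suc j)))"

definition path_label_from_A :: "(nat \<Rightarrow> nat) \<Rightarrow> bool" where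
  "path_label_from_A i \<longleftrightarrow> (\<exists>s. run_from_A i s)"

end

theory Submission
  imports Defs
begin

(* Overlaps are handled through their period: w has an overlap iff, for some i and P > 0,
   w(i+k) = w(i+k+P) for all k <= P.  Each state q of M is given a left context ctx q (the
   letter preceding the current word, or nothing) and a list of forbidden prefixes; z is
   admissible at q if ctx q followed by z is overlap-free and z avoids these prefixes.
   Admissibility at A is overlap-freeness.

   The properties of the transition table needed to combine
   these facts with contexts and forbidden prefixes concern words of length at most 3 and
   are checked by evaluation.  Then:
   - a code of an overlap-free word keeps every y_j admissible, which forces the labels
     to follow transitions of M (part 1);
   - along a run, forbidden prefixes never grow and shrink at nonzero labels; without
     forbidden prefixes an overlap would descend forever, so the coded word is overlap-free;
   - if the labels are not eventually 0 they fix all letters, so the coded word is unique;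
   - if they are eventually 0 the tail is a fixed point of mu, i.e. t or its complement,
     and the forbidden first letter of the final states decides overlap-freeness (part 2). *)

section \<open>Overlaps as periods\<close>

definition overlap_at :: "iword \<Rightarrow> nat \<Rightarrow> nat \<Rightarrow> bool" where
  "overlap_at w i P \<longleftrightarrow> 0 < P \<and> (\<forall>k\<le>P. w (i + k) = w (i + k + P))"

lemma is_overlap_period:
  assumes "is_overlap u"
  shows "\<exists>P>0. length u = 2*P+1 \<and> (\<forall>k\<le>P. u!k = u!(k+P))"
proof -
  from assms obtain a x where u: "u = a # x @ a # x @ [a]" unfolding is_overlap_def by blast
  show ?thesis
  proof (intro exI conjI allI impI)
    show "0 < Suc (length x)" by simp
    show "length u = 2 * Suc (length x) + 1" using u by simp
    fix k assume k: "k \<le> Suc (length x)"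
    show "u!k = u!(k + Suc (length x))"
    proof (cases k)
      case 0 then show ?thesis using u by (simp add: nth_append)
    next
      case (Suc m)
      then show ?thesis using u k
        by (cases "m < length x") (auto simp: nth_append nth_Cons' split: if_splits)
    qed
  qed
qed

lemma period_is_overlap:
  assumes P: "P > 0" "length u = 2*P+1" "\<forall>k\<le>P. u!k = u!(k+P)"
  shows "is_overlap u"
proof -
  define a where "a = u!0"
  define x where "x = take (P - 1) (drop 1 u)"
  have lx: "length x = P - 1" using P by (simp add: x_def)
  have xn: "\<And>m. m < P - 1 \<Longrightarrow> x!m = u!(Suc m)" using P by (simp add: x_def)
  have uP: "u!P = a" using P(3)[rule_format, of 0] by (simp add: a_def)
  have "u = a # x @ a # x @ [a]"
  proof (rule nth_equalityI)
    show "length u = length (a # x @ a # x @ [a])" using P lx by simp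
    fix n assume n: "n < length u"
    consider "n = 0" | "0 < n \<and> n < P" | "n = P" | "P < n \<and> n < 2*P" | "n = 2*P"
      using n P by linarith
    then show "u!n = (a # x @ a # x @ [a])!n"
    proof cases
      case 1 then show ?thesis by (simp add: a_def)
    next
      case 2 then show ?thesis using lx xn by (cases n) (auto simp: nth_append)
    next
      case 3 then show ?thesis using lx uP by (cases n) (auto simp: nth_append)
    next
      case 4
      have "(a # x @ a # x @ [a])!n = x!(n-P-1)" using 4 lx P(1)
        by (cases n) (auto simp: nth_append)
      also have "\<dots> = u!(n-P)"
      proof -
        have "n - P - 1 < P - 1" "Suc (n - P - 1) = n - P" using 4 by linarith+
        then show ?thesis using xn[of "n-P-1"] by simp
      qed
      also have "\<dots> = u!n"
      proof -
        have "n - P \<le> P" "n - P + P = n" using 4 by auto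
        then show ?thesis using P(3)[rule_format, of "n-P"] by simp
      qed
      finally show ?thesis by simp
    next
      case 5
      have "(a # x @ a # x @ [a])!n = a" using 5 lx P(1)
        by (cases n) (auto simp: nth_append)
      moreover have "u!n = u!P" using P(3)[rule_format, of P] 5 by (simp add: mult_2)
      ultimately show ?thesis using uP by simp
    qed
  qed
  then show ?thesis unfolding is_overlap_def by blast
qed

lemma is_overlap_iff_period:
  "is_overlap u \<longleftrightarrow> (\<exists>P>0. length u = 2*P+1 \<and> (\<forall>k\<le>P. u!k = u!(k+P)))"
  using is_overlap_period period_is_overlap by blast

lemma OF_iff_no_overlap_at: "w \<in> OF \<longleftrightarrow> (\<forall>i P. \<not> overlap_at w i P)"
proof
  assume "w \<in> OF"
  show "\<forall>i P. \<not> overlap_at w i P"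
  proof (intro allI notI)
    fix i P assume o: "overlap_at w i P"
    define u where "u = map (\<lambda>k. w (i+k)) [0..<2*P+1]"
    have un: "\<And>k. k < 2*P+1 \<Longrightarrow> u!k = w (i+k)"
      unfolding u_def by (subst nth_map) (simp_all del: upt_Suc)
    have lu: "length u = 2*P+1" by (simp add: u_def)
    have "is_overlap u" unfolding is_overlap_iff_period
    proof (intro exI conjI allI impI)
      show "0 < P" "length u = 2*P+1" using o lu by (auto simp: overlap_at_def)
      fix k assume "k \<le> P"
      then show "u!k = u!(k+P)" using o un[of k] un[of "k+P"] by (auto simp: overlap_at_def add.assoc)
    qed
    moreover have "occurs_at u w i" unfolding occurs_at_def using un lu by simp
    ultimately show False using \<open>w \<in> OF\<close> by (auto simp: OF_def overlap_free_def)
  qed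
next
  assume h: "\<forall>i P. \<not> overlap_at w i P"
  show "w \<in> OF" unfolding OF_def overlap_free_def
  proof (clarsimp)
    fix u i assume "is_overlap u" "occurs_at u w i"
    then obtain P where P: "P > 0" "length u = 2*P+1" "\<forall>k\<le>P. u!k = u!(k+P)"
      unfolding is_overlap_iff_period by blast
    have "overlap_at w i P" unfolding overlap_at_def
    proof (intro conjI allI impI)
      fix k assume k: "k \<le> P"
      have "w (i+k) = u!k" "w (i+(k+P)) = u!(k+P)"
        using \<open>occurs_at u w i\<close> P k by (auto simp: occurs_at_def)
      then show "w (i+k) = w (i+k+P)" using P k by (simp add: add.assoc)
    qed (use P in simp)
    then show False using h by blast
  qed
qed

lemma overlap_at_transfer:
  assumes "overlap_at X i P" "\<And>k. k \<le> 2*P \<Longrightarrow> X (i+k) = Y (j+k)"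
  shows "overlap_at Y j P"
  unfolding overlap_at_def
proof (intro conjI allI impI)
  show "0 < P" using assms(1) by (simp add: overlap_at_def)
  fix k assume k: "k \<le> P"
  have "Y (j+k) = X (i+k)" using assms(2)[of k] k by simp
  also have "\<dots> = X (i+k+P)" using assms(1) k by (simp add: overlap_at_def)
  also have "\<dots> = Y (j+(k+P))" using assms(2)[of "k+P"] k by (simp add: add.assoc)
  finally show "Y (j + k) = Y (j + k + P)" by (simp add: add.assoc)
qed

section \<open>Overlaps under the Thue--Morse morphism\<close>

lemma mu_even[simp]: "mu z (2*m) = z m" by (simp add: mu_def)

lemma mu_block_differs: "even m \<Longrightarrow> mu z m \<noteq> mu z (Suc m)"
  by (auto simp: mu_def elim!: evenE)

lemma mu_shift_even: "mu z (n + 2*Q) = mu z n \<longleftrightarrow> z (n div 2 + Q) = z (n div 2)"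
  by (auto simp: mu_def add.commute)

lemma overlap_mu_lift:
  assumes o: "overlap_at W i P" and b: "b \<le> 1"
  shows "overlap_at (mu W) (2*i + b) (2*P)"
  unfolding overlap_at_def
proof (intro conjI allI impI)
  show "0 < 2*P" using o by (simp add: overlap_at_def)
  fix k assume k: "k \<le> 2*P"
  have d: "(2*i + b + k) div 2 = i + (k + b) div 2" by (simp add: add.commute add.left_commute)
  have "(k + b) div 2 \<le> P" using k b by linarith
  then have "W (i + (k + b) div 2) = W (i + (k + b) div 2 + P)" using o by (simp add: overlap_at_def)
  then show "mu W (2*i + b + k) = mu W (2*i + b + k + 2*P)"
    using mu_shift_even[of W "2*i + b + k" P] d by simp
qed

text \<open>If an odd shift P preserves two consecutive letters of mu z, these letters differ:
  one of the positions m, m + P is even and starts a block.\<close>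

lemma mu_odd_shift_alternates:
  assumes "odd P" "mu z (m + P) = mu z m" "mu z (Suc m + P) = mu z (Suc m)"
  shows "mu z m \<noteq> mu z (Suc m)"
proof (cases "even m")
  case True then show ?thesis by (rule mu_block_differs)
next
  case False
  then have "even (m + P)" using assms(1) by simp
  then have "mu z (m + P) \<noteq> mu z (Suc (m + P))" by (rule mu_block_differs)
  then show ?thesis using assms(2,3) by simp
qed

lemma alternating_mu_cube:
  assumes a: "\<And>m. 2*c \<le> m \<Longrightarrow> m \<le> 2*c + 3 \<Longrightarrow> mu z m \<noteq> mu z (Suc m)"
  shows "overlap_at z c 1"
proof -
  have "mu z (2*c) \<noteq> mu z (Suc (2*c))" "mu z (Suc (2*c)) \<noteq> mu z (2*Suc c)"
       "mu z (2*Suc c) \<noteq> mu z (Suc (2*Suc c))" "mu z (Suc (2*Suc c)) \<noteq> mu z (2*Suc (Suc c))"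
    using a[of "2*c"] a[of "Suc (2*c)"] a[of "2*Suc c"] a[of "Suc (2*Suc c)"] by simp_all
  then have "z c = z (Suc c)" "z (Suc c) = z (Suc (Suc c))"
    by (metis (full_types) mu_even)+
  then show ?thesis by (auto simp: overlap_at_def le_Suc_eq)
qed

lemma overlap_mu_odd_period_alternates:
  assumes o: "overlap_at (mu z) i P" and P: "odd P" and m: "i \<le> m" "m < i + 2*P"
  shows "mu z m \<noteq> mu z (Suc m)"
proof -
  have h: "\<And>k. k \<le> P \<Longrightarrow> mu z (i+k) = mu z (i+k+P)" using o by (simp add: overlap_at_def)
  show ?thesis
  proof (cases "m < i + P")
    case True
    show ?thesis
      by (rule mu_odd_shift_alternates[OF P])
         (use h[of "m-i"] h[of "Suc m - i"] m True in simp_all)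
  next
    case False
    define m' where "m' = m - P"
    have ar: "m' - i \<le> P" "i + (m' - i) = m'" "m' + P = m"
             "Suc m' - i \<le> P" "i + (Suc m' - i) = Suc m'" "Suc m' + P = Suc m"
      using m False by (auto simp: m'_def)
    have "mu z m' = mu z m" "mu z (Suc m') = mu z (Suc m)"
      using h[of "m'-i"] h[of "Suc m' - i"] ar by simp_all
    moreover have "mu z m' \<noteq> mu z (Suc m')"
      by (rule mu_odd_shift_alternates[OF P]) (use calculation ar in simp_all)
    ultimately show ?thesis by simp
  qed
qed

text \<open>Overlaps descend: an overlap in mu z yields an overlap in z of smaller period.
  Even periods halve; odd periods force alternation, hence a cube aaa in z.\<close>

lemma overlap_mu_descent:
  assumes o: "overlap_at (mu z) i P"
  shows "\<exists>i' P'. P' < P \<and> overlap_at z i' P'"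
proof (cases "even P")
  case True
  then obtain Q where Q: "P = 2*Q" by (auto elim: evenE)
  have Qp: "Q > 0" using o Q by (simp add: overlap_at_def)
  have "overlap_at z (i div 2) Q" unfolding overlap_at_def
  proof (intro conjI allI impI)
    fix k assume k: "k \<le> Q"
    have "mu z (i + 2*k) = mu z (i + 2*k + 2*Q)" using o k Q by (simp add: overlap_at_def)
    then show "z (i div 2 + k) = z (i div 2 + k + Q)"
      using mu_shift_even[of z "i+2*k" Q] by (simp add: algebra_simps)
  qed (use Qp in simp)
  then show ?thesis using Q Qp by (intro exI[of _ "i div 2"] exI[of _ Q]) simp
next
  case odd: False
  have alt: "\<And>m. i \<le> m \<Longrightarrow> m < i + 2*P \<Longrightarrow> mu z m \<noteq> mu z (Suc m)"
    using overlap_mu_odd_period_alternates[OF o odd] by blast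
  have Pp: "P > 0" using o by (simp add: overlap_at_def)
  show ?thesis
  proof (cases "P = 1")
    case True
    have "mu z (i + 0) = mu z (i + 0 + P)" using o unfolding overlap_at_def by blast
    then have "mu z i = mu z (Suc i)" using True by simp
    then show ?thesis using alt[of i] True by simp
  next
    case False
    then have P3: "P \<ge> 3" using odd Pp by presburger
    define c where "c = (i + 1) div 2"
    have "overlap_at z c 1" by (rule alternating_mu_cube) (use alt P3 in \<open>auto simp: c_def\<close>)
    then show ?thesis using P3 by (intro exI[of _ c] exI[of _ 1]) simp
  qed
qed

section \<open>Short left contexts\<close>

text \<open>The context passed from x = v mu(z) down to z: only the letter just before z matters,
  and in mu-coordinates it is the complement of the last letter of v.\<close>

definition ctx_down :: "bool list \<Rightarrow> bool list" where
  "ctx_down v = (if v = [] then [] else [\<not> last v])"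

lemma short_word_cases:
  assumes "length (v :: bool list) \<le> 2"
  obtains "v = []" | a where "v = [a]" | a where "v = [a, \<not> a]" | a where "v = [a, a]"
proof -
  consider "v = []" | a where "v = [a]" | a b where "v = [a, b]"
    using assms by (cases v rule: remdups_adj.cases) auto
  then show thesis
  proof cases
    case (3 a b)
    then show ?thesis using that(3)[of a] that(4)[of a] by (cases "b = a") auto
  qed (use that in auto)
qed

lemma conc_Nil[simp]: "conc [] y = y" by (simp add: conc_def fun_eq_iff)

lemma conc_conc: "conc u (conc v w) = conc (u @ v) w"
  by (auto simp: conc_def fun_eq_iff nth_append)

lemma conc_single_mu: "conc [a] (mu z) n = mu (conc [\<not>a] z) (Suc n)"
  by (cases n) (auto simp: conc_def mu_def)

lemma conc_block_mu: "conc [a, \<not>a] (mu z) = mu (conc [a] z)"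
proof
  fix n show "conc [a, \<not>a] (mu z) n = mu (conc [a] z) n"
  proof (cases n)
    case (Suc m) then show ?thesis by (cases m) (auto simp: conc_def mu_def)
  qed (simp add: conc_def mu_def)
qed

lemma conc_double_mu: "n \<ge> 1 \<Longrightarrow> conc [a, a] (mu z) n = mu (conc [\<not>a] z) n"
proof (cases n)
  case (Suc m) then show ?thesis by (cases m) (auto simp: conc_def mu_def)
qed simp

lemma overlap_lift_ctx:
  assumes v: "length v \<le> 2" and o: "overlap_at (conc (ctx_down v) z) i P"
  shows "\<exists>i' P'. overlap_at (conc v (mu z)) i' P'"
  using v
proof (cases rule: short_word_cases)
  case 1 then show ?thesis using overlap_mu_lift[OF _, of z i P 0] o by (auto simp: ctx_down_def)
next
  case (2 a)
  then have "overlap_at (mu (conc [\<not>a] z)) (2*i+1) (2*P)"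
    using o overlap_mu_lift[of _ i P 1] by (simp add: ctx_down_def)
  then have "overlap_at (conc [a] (mu z)) (2*i) (2*P)"
    by (rule overlap_at_transfer) (simp add: conc_single_mu)
  then show ?thesis using 2 by blast
next
  case (3 a)
  then have "overlap_at (mu (conc [a] z)) (2*i) (2*P)"
    using o overlap_mu_lift[of _ i P 0] by (simp add: ctx_down_def)
  then show ?thesis using 3 conc_block_mu[of a z] by auto
next
  case (4 a)
  then have "overlap_at (mu (conc [\<not>a] z)) (2*i+1) (2*P)"
    using o overlap_mu_lift[of _ i P 1] by (simp add: ctx_down_def)
  then have "overlap_at (conc [a,a] (mu z)) (2*i+1) (2*P)"
    by (rule overlap_at_transfer) (simp add: conc_double_mu)
  then show ?thesis using 4 by blast
qed

text \<open>An overlap at the very start of a a mu(z) never has even period: positions P and P+1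
  would repeat a a across a block boundary of mu z.\<close>

lemma double_prefix_overlap_odd:
  assumes o: "overlap_at (conc [a, a] (mu z)) 0 P"
  shows "odd P"
proof
  assume "even P"
  then obtain Q0 where Q0: "P = 2*Q0" by (auto elim: evenE)
  moreover have "P > 0" using o by (simp add: overlap_at_def)
  ultimately obtain Q where Q: "P = Suc (Suc (2*Q))" by (cases Q0) auto
  have h: "\<And>k. k \<le> P \<Longrightarrow> conc [a, a] (mu z) k = conc [a, a] (mu z) (k + P)"
    using o by (simp add: overlap_at_def)
  have "mu z (2*Q) = a" using h[of 0] Q by (simp add: conc_def)
  moreover have "mu z (Suc (2*Q)) = a" using h[of 1] Q by (simp add: conc_def)
  moreover have "mu z (2*Q) \<noteq> mu z (Suc (2*Q))" by (rule mu_block_differs) simp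
  ultimately show False by simp
qed

text \<open>The exceptional case of the descent: an overlap at the start of a a mu(z) descends,
  unless z begins with a or with (not a) a a.  These are the forbidden prefixes of the
  states reached by the labels producing the context a a.\<close>

lemma double_prefix_overlap_descent:
  assumes o: "overlap_at (conc [a, a] (mu z)) 0 P"
  shows "(\<exists>i' P'. P' < P \<and> overlap_at (conc [\<not>a] z) i' P') \<or>
         z 0 = a \<or> (z 0 = (\<not>a) \<and> z 1 = a \<and> z 2 = a)"
proof -
  let ?W = "conc [\<not>a] z"
  let ?X = "conc [a, a] (mu z)"
  have h: "\<And>k. k \<le> P \<Longrightarrow> ?X k = ?X (k + P)" using o by (simp add: overlap_at_def)
  have X: "\<And>n. ?X n = (if n < 2 then a else mu z (n - 2))"
    by (auto simp: conc_def nth_Cons' numeral_2_eq_2)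
  have "odd P" "P > 0" using double_prefix_overlap_odd[OF o] o by (simp_all add: overlap_at_def)
  then have "P \<noteq> 2" "P \<noteq> 4" "P \<noteq> 6" "P > 0" by auto
  then consider "P = 1" | "P = 3" | "P = 5" | "P \<ge> 7" by linarith
  then show ?thesis
  proof cases
    case 1
    then have "z 0 = a" using h[of 1] by (simp add: X mu_def)
    then show ?thesis by blast
  next
    case 2
    then have "mu z 1 = a" "mu z 2 = a" "mu z 4 = mu z 1"
      using h[of 0] h[of 1] h[of 3] unfolding X by simp_all
    then have "z 0 = (\<not>a) \<and> z 1 = a \<and> z 2 = a" by (auto simp: mu_def)
    then show ?thesis by blast
  next
    case 3
    have "a = (\<not> z 1)" "a = z 2" "z 0 = (\<not> z 2)" "(\<not> z 0) = z 3" "(\<not> z 1) = z 4"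
      using h[of 0] h[of 1] h[of 2] h[of 3] h[of 5] 3 unfolding X by (simp_all add: mu_def)
    then have "z 2 = z 3" "z 3 = z 4" by auto
    then have "overlap_at ?W 3 1" by (simp add: overlap_at_def conc_def le_Suc_eq numeral_eq_Suc)
    then show ?thesis using 3 by (intro disjI1 exI[of _ 3] exI[of _ 1]) simp
  next
    case 4
    have alt: "\<And>m. 1 \<le> m \<Longrightarrow> m \<le> P - 1 \<Longrightarrow> mu ?W m \<noteq> mu ?W (Suc m)"
    proof -
      fix m assume m: "1 \<le> m" "m \<le> P - 1"
      show "mu ?W m \<noteq> mu ?W (Suc m)"
        by (rule mu_odd_shift_alternates[OF \<open>odd P\<close>])
           (use h[of m] h[of "Suc m"] m conc_double_mu[of m a z] conc_double_mu[of "m+P" a z]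
              conc_double_mu[of "Suc m" a z] conc_double_mu[of "Suc m + P" a z] in simp_all)
    qed
    have "overlap_at ?W 1 1"
    proof (rule alternating_mu_cube)
      fix m :: nat assume "2*1 \<le> m" "m \<le> 2*1 + 3"
      then show "mu ?W m \<noteq> mu ?W (Suc m)" using 4 by (intro alt) simp_all
    qed
    then show ?thesis using 4 by (intro disjI1 exI[of _ 1] exI[of _ 1]) simp
  qed
qed

lemma overlap_descent_ctx:
  assumes v: "length v \<le> 2" and o: "overlap_at (conc v (mu z)) i P"
  shows "(\<exists>i' P'. P' < P \<and> overlap_at (conc (ctx_down v) z) i' P') \<or>
         (\<exists>a. v = [a,a] \<and> (z 0 = a \<or> (z 0 = (\<not>a) \<and> z 1 = a \<and> z 2 = a)))"
  using v
proof (cases rule: short_word_cases)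
  case 1 then show ?thesis using o overlap_mu_descent by (auto simp: ctx_down_def)
next
  case (2 a)
  have "overlap_at (conc [a] (mu z)) i P" using o 2 by simp
  then have "overlap_at (mu (conc [\<not>a] z)) (Suc i) P"
    by (rule overlap_at_transfer) (simp add: conc_single_mu)
  then show ?thesis using overlap_mu_descent 2 by (auto simp: ctx_down_def)
next
  case (3 a)
  then have "overlap_at (mu (conc [a] z)) i P" using o conc_block_mu[of a z] by simp
  then show ?thesis using overlap_mu_descent 3 by (auto simp: ctx_down_def)
next
  case (4 a)
  show ?thesis
  proof (cases "i = 0")
    case True
    then show ?thesis using double_prefix_overlap_descent[of a z P] o 4 by (auto simp: ctx_down_def)
  next
    case False
    have "overlap_at (conc [a, a] (mu z)) i P" using o 4 by simp
    then have "overlap_at (mu (conc [\<not>a] z)) i P"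
      by (rule overlap_at_transfer) (use False in \<open>simp add: conc_double_mu\<close>)
    then show ?thesis using overlap_mu_descent 4 by (auto simp: ctx_down_def)
  qed
qed

section \<open>The automaton with contexts and forbidden prefixes\<close>

text \<open>Each state records the letter preceding the current word (its left context) and the
  prefixes the current word must avoid.\<close>

fun ctx :: "state \<Rightarrow> bool list" where
  "ctx A = []" | "ctx B = [True]" | "ctx C = [True]" | "ctx D = [False]" | "ctx E = [False]"
| "ctx F = [False]" | "ctx G = [False]" | "ctx H = [True]" | "ctx I = [True]" | "ctx J = [True]"
| "ctx K = [False]"

fun forbidden_prefixes :: "state \<Rightarrow> bool list list" where
  "forbidden_prefixes A = []" | "forbidden_prefixes B = []"
| "forbidden_prefixes C = [[False], [True, False, False]]" | "forbidden_prefixes D = []"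
| "forbidden_prefixes E = [[True], [False, True, True]]"
| "forbidden_prefixes F = [[False], [True, False]]" | "forbidden_prefixes G = [[False]]"
| "forbidden_prefixes H = [[False]]" | "forbidden_prefixes I = [[True], [False, True]]"
| "forbidden_prefixes J = [[True]]" | "forbidden_prefixes K = [[True]]"

definition has_forbidden_prefix :: "state \<Rightarrow> iword \<Rightarrow> bool" where
  "has_forbidden_prefix q z \<longleftrightarrow> (\<exists>f\<in>set (forbidden_prefixes q). \<forall>k<length f. z k = f!k)"

text \<open>The invariant carried along a code: z is admissible at q.\<close>

definition admissible :: "state \<Rightarrow> iword \<Rightarrow> bool" where
  "admissible q z \<longleftrightarrow> (\<forall>i P. \<not> overlap_at (conc (ctx q) z) i P) \<and> \<not> has_forbidden_prefix q z"

lemma admissible_A_iff_OF: "admissible A z \<longleftrightarrow> z \<in> OF"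
  by (simp add: admissible_def has_forbidden_prefix_def OF_iff_no_overlap_at)

lemma forbidden_prefix_length: "f \<in> set (forbidden_prefixes q) \<Longrightarrow> 1 \<le> length f \<and> length f \<le> 3"
  by (cases q) auto

lemma has_forbidden_prefix_single:
  "forbidden_prefixes q = [[b]] \<Longrightarrow> has_forbidden_prefix q z \<longleftrightarrow> z 0 = b"
  by (auto simp: has_forbidden_prefix_def)

lemma has_forbidden_prefix_none: "forbidden_prefixes q = [] \<Longrightarrow> \<not> has_forbidden_prefix q z"
  by (auto simp: has_forbidden_prefix_def)

subsection \<open>Finite prefixes of infinite words\<close>

lemma mu_list_Cons[simp]: "mu_list (a # w) = a # (\<not>a) # mu_list w"
  by (simp add: mu_list_def)

lemma mu_list_Nil[simp]: "mu_list [] = []"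
  by (simp add: mu_list_def)

lemma mu_list_append[simp]: "mu_list (u @ v) = mu_list u @ mu_list v"
  by (simp add: mu_list_def)

lemma length_mu_list[simp]: "length (mu_list w) = 2 * length w"
  by (induction w) auto

lemma nth_mu_list:
  "m < 2 * length w \<Longrightarrow> mu_list w ! m = (if even m then w!(m div 2) else \<not> w!(m div 2))"
proof (induction w arbitrary: m)
  case Nil then show ?case by simp
next
  case (Cons a w)
  show ?case
  proof (cases m)
    case (Suc m1)
    show ?thesis
    proof (cases m1)
      case (Suc m2)
      then show ?thesis using Cons \<open>m = Suc m1\<close> by auto
    qed (use Suc in simp)
  qed simp
qed

lemma prefix_conc_mu:
  "map (conc p (mu z)) [0..<length p + 2*n] = p @ mu_list (map z [0..<n])"
proof (rule nth_equalityI)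
  fix m assume m: "m < length (map (conc p (mu z)) [0..<length p + 2*n])"
  show "map (conc p (mu z)) [0..<length p + 2*n] ! m = (p @ mu_list (map z [0..<n])) ! m"
  proof (cases "m < length p")
    case True then show ?thesis using m by (simp add: conc_def nth_append del: upt_Suc)
  next
    case False
    then show ?thesis using m
      by (simp add: conc_def nth_append nth_mu_list mu_def del: upt_Suc)
  qed
qed simp

lemma prefix_conc_conc_mu:
  "map (conc c (conc p (mu z))) [0..<length c + (length p + 2*n)]
     = c @ p @ mu_list (map z [0..<n])"
proof -
  have "map (conc c y) [0..<length c + m] = c @ map y [0..<m]" for y m
    by (rule nth_equalityI) (auto simp: conc_def nth_append simp del: upt_Suc)
  then show ?thesis by (simp only: prefix_conc_mu)
qed

lemma take_map_upt: "m \<le> n \<Longrightarrow> take m (map y [0..<n]) = map y [0..<m]"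
  by (rule nth_equalityI) (simp_all del: upt_Suc)

lemma map_upt_eq_iff: "map y [0..<length f] = f \<longleftrightarrow> (\<forall>k<length f. y k = f!k)"
proof
  assume "map y [0..<length f] = f"
  then show "\<forall>k<length f. y k = f!k" by (metis add_0 diff_zero nth_map_upt)
next
  assume "\<forall>k<length f. y k = f!k"
  then show "map y [0..<length f] = f" by (intro nth_equalityI) (simp_all del: upt_Suc)
qed

subsection \<open>Executable versions of overlaps and forbidden prefixes\<close>

fun words_of_length :: "nat \<Rightarrow> bool list list" where
  "words_of_length 0 = [[]]"
| "words_of_length (Suc n) = concat (map (\<lambda>w. [False # w, True # w]) (words_of_length n))"

lemma words_of_length_complete: "length w = n \<Longrightarrow> w \<in> set (words_of_length n)"
proof (induction n arbitrary: w)
  case (Suc n)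
  obtain a w' where aw: "w = a # w'" "length w' = n" using Suc.prems by (cases w) auto
  then have "w' \<in> set (words_of_length n)" using Suc.IH by blast
  then show ?case using aw(1) by (cases a) auto
qed simp

definition list_has_overlap :: "bool list \<Rightarrow> bool" where
  "list_has_overlap w \<longleftrightarrow> (\<exists>i\<in>set [0..<length w]. \<exists>P\<in>set [1..<length w]. i + 2*P < length w \<and>
     (\<forall>k\<in>set [0..<Suc P]. w!(i+k) = w!(i+k+P)))"

definition starts_forbidden :: "state \<Rightarrow> bool list \<Rightarrow> bool" where
  "starts_forbidden q u \<longleftrightarrow> (\<exists>f\<in>set (forbidden_prefixes q). take (length f) u = f)"

lemma list_has_overlap_prefix:
  assumes "list_has_overlap (map y [0..<n])"
  shows "\<exists>i P. overlap_at y i P"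
proof -
  obtain i P where iP: "P \<ge> 1" "i + 2*P < n"
    "\<forall>k\<in>set [0..<Suc P]. map y [0..<n] ! (i+k) = map y [0..<n] ! (i+k+P)"
    using assms unfolding list_has_overlap_def by (auto simp del: upt_Suc)
  have "overlap_at y i P" unfolding overlap_at_def
  proof (intro conjI allI impI)
    fix k assume k: "k \<le> P"
    have "map y [0..<n] ! (i+k) = map y [0..<n] ! (i+k+P)" using iP(3) k by (simp del: upt_Suc)
    moreover have "i+k < n" "i+k+P < n" using k iP by auto
    ultimately show "y (i+k) = y (i+k+P)" by (simp del: upt_Suc)
  qed (use iP in simp)
  then show ?thesis by blast
qed

lemma starts_forbidden_prefix:
  assumes "n \<ge> 3"
  shows "starts_forbidden q (map y [0..<n]) \<longleftrightarrow> has_forbidden_prefix q y"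
proof -
  have "take (length f) (map y [0..<n]) = f \<longleftrightarrow> (\<forall>k<length f. y k = f!k)"
    if "f \<in> set (forbidden_prefixes q)" for f
  proof -
    have "length f \<le> n" using forbidden_prefix_length[OF that] assms by simp
    then have "take (length f) (map y [0..<n]) = map y [0..<length f]" by (rule take_map_upt)
    then show ?thesis using map_upt_eq_iff[of y f] by simp
  qed
  then show ?thesis unfolding starts_forbidden_def has_forbidden_prefix_def by blast
qed

lemma finite_witness_not_admissible:
  assumes "n \<ge> 2"
    and "list_has_overlap (ctx q @ pref k @ mu_list (map z [0..<n]))
         \<or> starts_forbidden q (pref k @ mu_list (map z [0..<n]))"
  shows "\<not> admissible q (conc (pref k) (mu z))"
  using assms(2)
proof
  assume "list_has_overlap (ctx q @ pref k @ mu_list (map z [0..<n]))"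
  then have "list_has_overlap (map (conc (ctx q) (conc (pref k) (mu z)))
               [0..<length (ctx q) + (length (pref k) + 2*n)])"
    by (simp only: prefix_conc_conc_mu)
  then show ?thesis using list_has_overlap_prefix by (auto simp: admissible_def)
next
  assume "starts_forbidden q (pref k @ mu_list (map z [0..<n]))"
  then have "starts_forbidden q (map (conc (pref k) (mu z)) [0..<length (pref k) + 2*n])"
    by (simp only: prefix_conc_mu)
  then show ?thesis using starts_forbidden_prefix assms(1) by (simp add: admissible_def)
qed

subsection \<open>Properties of the transition table, checked by evaluation\<close>

definition all_states :: "state list" where
  "all_states = [A, B, C, D, E, F, G, H, I, J, K]"

lemma in_all_states: "q \<in> set all_states"
  by (cases q) (auto simp: all_states_def)

definition transition_shape_ok :: bool where
  "transition_shape_ok \<longleftrightarrow> (\<forall>q\<in>set all_states. \<forall>k\<in>set [0..<5]. case delta q k of None \<Rightarrow> True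
     | Some q' \<Rightarrow> length (ctx q @ pref k) \<le> 2 \<and> ctx q' = ctx_down (ctx q @ pref k) \<and>
        (case ctx q @ pref k of [a, b] \<Rightarrow> (a = b \<longrightarrow> forbidden_prefixes q' = [[a], [\<not>a, a, a]])
         | _ \<Rightarrow> True))"

definition forbidden_descent_ok :: bool where
  "forbidden_descent_ok \<longleftrightarrow> (\<forall>q\<in>set all_states. \<forall>k\<in>set [0..<5]. case delta q k of None \<Rightarrow> True
     | Some q' \<Rightarrow> (\<forall>w\<in>set (words_of_length 3). \<forall>f\<in>set (forbidden_prefixes q).
        take (length f) (pref k @ mu_list w) = f \<longrightarrow>
        (\<exists>g\<in>set (forbidden_prefixes q'). take (length g) w = g \<and> length g \<le> length f
           \<and> (k \<noteq> 0 \<longrightarrow> length g < length f))))"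

definition forbidden_lift_ok :: bool where
  "forbidden_lift_ok \<longleftrightarrow> (\<forall>q\<in>set all_states. \<forall>k\<in>set [0..<5]. case delta q k of None \<Rightarrow> True
     | Some q' \<Rightarrow> (\<forall>w\<in>set (words_of_length 3). starts_forbidden q' w \<longrightarrow>
          list_has_overlap (ctx q @ pref k @ mu_list w) \<or> starts_forbidden q (pref k @ mu_list w)))"

definition missing_transitions_ok :: bool where
  "missing_transitions_ok \<longleftrightarrow> (\<forall>q\<in>set all_states. \<forall>k\<in>set [0..<5]. delta q k = None \<longrightarrow>
     (\<forall>w\<in>set (words_of_length 2).
        list_has_overlap (ctx q @ pref k @ mu_list w) \<or> starts_forbidden q (pref k @ mu_list w)))"

lemma transition_shape_ok: transition_shape_ok by code_simp
lemma forbidden_descent_ok: forbidden_descent_ok by code_simp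
lemma forbidden_lift_ok: forbidden_lift_ok by code_simp
lemma missing_transitions_ok: missing_transitions_ok by code_simp

lemma delta_label_lt5: "delta q k = Some q' \<Longrightarrow> k < 5"
proof (rule ccontr)
  assume d: "delta q k = Some q'" and "\<not> k < 5"
  then have e: "k = Suc (Suc (Suc (Suc (Suc (k - 5)))))" by arith
  have "delta q k = None" by (subst e) (cases q; simp)
  then show False using d by simp
qed

lemma transition_shape:
  assumes "delta q k = Some q'"
  shows "length (ctx q @ pref k) \<le> 2" "ctx q' = ctx_down (ctx q @ pref k)"
    "\<And>a. ctx q @ pref k = [a, a] \<Longrightarrow> forbidden_prefixes q' = [[a], [\<not>a, a, a]]"
proof -
  have "k \<in> set [0..<5]" using delta_label_lt5[OF assms] by simp
  then have "case delta q k of None \<Rightarrow> True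
     | Some q' \<Rightarrow> length (ctx q @ pref k) \<le> 2 \<and> ctx q' = ctx_down (ctx q @ pref k) \<and>
        (case ctx q @ pref k of [a, b] \<Rightarrow> (a = b \<longrightarrow> forbidden_prefixes q' = [[a], [\<not>a, a, a]])
         | _ \<Rightarrow> True)"
    using transition_shape_ok in_all_states[of q] unfolding transition_shape_ok_def by blast
  then show "length (ctx q @ pref k) \<le> 2" "ctx q' = ctx_down (ctx q @ pref k)"
    "\<And>a. ctx q @ pref k = [a, a] \<Longrightarrow> forbidden_prefixes q' = [[a], [\<not>a, a, a]]"
    using assms by auto
qed

subsection \<open>One step of a code\<close>

lemma overlap_descent_step:
  assumes d: "delta q k = Some q'"
    and o: "overlap_at (conc (ctx q) (conc (pref k) (mu z))) i P"
  shows "(\<exists>i' P'. P' < P \<and> overlap_at (conc (ctx q') z) i' P') \<or> has_forbidden_prefix q' z"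
proof -
  let ?v = "ctx q @ pref k"
  have "overlap_at (conc ?v (mu z)) i P" using o by (simp add: conc_conc)
  from overlap_descent_ctx[OF transition_shape(1)[OF d] this]
  show ?thesis
  proof
    assume "\<exists>i' P'. P' < P \<and> overlap_at (conc (ctx_down ?v) z) i' P'"
    then show ?thesis using transition_shape(2)[OF d] by simp
  next
    assume "\<exists>a. ?v = [a, a] \<and> (z 0 = a \<or> (z 0 = (\<not>a) \<and> z 1 = a \<and> z 2 = a))"
    then obtain a where a: "?v = [a, a]" "z 0 = a \<or> (z 0 = (\<not>a) \<and> z 1 = a \<and> z 2 = a)" by blast
    have "forbidden_prefixes q' = [[a], [\<not>a, a, a]]" using transition_shape(3)[OF d a(1)] .
    moreover have "(\<forall>k<1. z k = [a]!k) \<or> (\<forall>k<3. z k = [\<not>a, a, a]!k)"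
      using a(2) by (auto simp: less_Suc_eq numeral_eq_Suc)
    ultimately show ?thesis unfolding has_forbidden_prefix_def by auto
  qed
qed

lemma admissible_step:
  assumes d: "delta q k = Some q'" and g: "admissible q (conc (pref k) (mu z))"
  shows "admissible q' z"
proof -
  let ?v = "ctx q @ pref k"
  have "\<not> overlap_at (conc (ctx q') z) i P" for i P
  proof
    assume "overlap_at (conc (ctx q') z) i P"
    then have "overlap_at (conc (ctx_down ?v) z) i P" using transition_shape(2)[OF d] by simp
    then obtain i' P' where "overlap_at (conc ?v (mu z)) i' P'"
      using overlap_lift_ctx[OF transition_shape(1)[OF d]] by blast
    then show False using g by (simp add: admissible_def conc_conc)
  qed
  moreover have "\<not> has_forbidden_prefix q' z"
  proof
    assume "has_forbidden_prefix q' z"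
    then have "starts_forbidden q' (map z [0..<3])" using starts_forbidden_prefix by simp
    moreover have "k \<in> set [0..<5]" using delta_label_lt5[OF d] by simp
    ultimately have "list_has_overlap (ctx q @ pref k @ mu_list (map z [0..<3]))
         \<or> starts_forbidden q (pref k @ mu_list (map z [0..<3]))"
      using forbidden_lift_ok in_all_states[of q] d words_of_length_complete[of "map z [0..<3]" 3]
      unfolding forbidden_lift_ok_def by fastforce
    then show False using finite_witness_not_admissible[of 3] g by simp
  qed
  ultimately show ?thesis by (simp add: admissible_def)
qed

lemma admissible_has_transition:
  assumes g: "admissible q (conc (pref k) (mu z))" and k: "k < 5"
  shows "\<exists>q'. delta q k = Some q'"
proof (rule ccontr)
  assume "\<nexists>q'. delta q k = Some q'"
  then have "delta q k = None" by simp
  then have "list_has_overlap (ctx q @ pref k @ mu_list (map z [0..<2]))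
         \<or> starts_forbidden q (pref k @ mu_list (map z [0..<2]))"
    using missing_transitions_ok in_all_states[of q] k words_of_length_complete[of "map z [0..<2]" 2]
    unfolding missing_transitions_ok_def by simp
  then show False using finite_witness_not_admissible[of 2] g by simp
qed

lemma forbidden_prefix_step:
  assumes d: "delta q k = Some q'" and f: "f \<in> set (forbidden_prefixes q)"
    and h: "\<forall>m<length f. conc (pref k) (mu z) m = f!m"
  shows "\<exists>g\<in>set (forbidden_prefixes q'). (\<forall>m<length g. z m = g!m) \<and> length g \<le> length f
           \<and> (k \<noteq> 0 \<longrightarrow> length g < length f)"
proof -
  let ?w = "map z [0..<3]"
  have lf: "length f \<le> 3" using forbidden_prefix_length[OF f] by simp
  have "take (length f) (map (conc (pref k) (mu z)) [0..<length (pref k) + 2*3])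
          = map (conc (pref k) (mu z)) [0..<length f]"
    using lf by (intro take_map_upt) simp
  also have "\<dots> = f" using h map_upt_eq_iff[of "conc (pref k) (mu z)" f] by simp
  finally have "take (length f) (pref k @ mu_list ?w) = f" by (simp only: prefix_conc_mu)
  moreover have "k \<in> set [0..<5]" using delta_label_lt5[OF d] by simp
  ultimately obtain g where g: "g \<in> set (forbidden_prefixes q')" "take (length g) ?w = g"
      "length g \<le> length f" "k \<noteq> 0 \<longrightarrow> length g < length f"
    using forbidden_descent_ok in_all_states[of q] d f words_of_length_complete[of ?w 3]
    unfolding forbidden_descent_ok_def by fastforce
  have "length g \<le> 3" using forbidden_prefix_length[OF g(1)] by simp
  then have "take (length g) ?w = map z [0..<length g]" by (rule take_map_upt)
  then have "\<forall>m<length g. z m = g!m" using g(2) map_upt_eq_iff[of z g] by simp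
  then show ?thesis using g by blast
qed

section \<open>The Thue--Morse words\<close>

abbreviation mu_iter :: "nat \<Rightarrow> bool \<Rightarrow> bool list" where
  "mu_iter k a \<equiv> (mu_list ^^ k) [a]"

lemma mu_list_map_Not: "mu_list (map Not w) = map Not (mu_list w)"
  by (induction w) auto

lemma length_mu_iter: "length (mu_iter k a) = 2^k"
  by (induction k) auto

lemma mu_iter_Not: "mu_iter k (\<not>a) = map Not (mu_iter k a)"
  by (induction k) (auto simp: mu_list_map_Not)

lemma mu_iter_Suc: "mu_iter (Suc k) a = mu_iter k a @ mu_iter k (\<not>a)"
proof (induction k arbitrary: a)
  case (Suc k)
  have "mu_iter (Suc (Suc k)) a = mu_list (mu_iter k a @ mu_iter k (\<not>a))" using Suc by simp
  then show ?case by simp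
qed simp

lemma mu_iter_stable: "n < 2^k \<Longrightarrow> k \<le> k' \<Longrightarrow> mu_iter k' a ! n = mu_iter k a ! n"
proof (induction k')
  case (Suc k')
  show ?case
  proof (cases "k = Suc k'")
    case False
    then have kk: "k \<le> k'" using Suc by simp
    have "n < 2^k'" using Suc(2) kk by (meson less_le_trans one_le_numeral power_increasing)
    then have "mu_iter (Suc k') a ! n = mu_iter k' a ! n"
      by (simp only: mu_iter_Suc nth_append length_mu_iter) simp
    then show ?thesis using Suc kk by simp
  qed simp
qed simp

lemma less_two_power_Suc: "n < 2 ^ Suc n"
  by (induction n) auto

lemma mu_omega_mu_iter:
  assumes "n < 2^k"
  shows "mu_omega a n = mu_iter k a ! n"
proof (cases "k \<le> Suc n")
  case True then show ?thesis using mu_iter_stable[OF assms True] by (simp add: mu_omega_def)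
next
  case False
  have "mu_iter k a ! n = mu_iter (Suc n) a ! n"
    by (rule mu_iter_stable) (use less_two_power_Suc[of n] False in simp_all)
  then show ?thesis by (simp add: mu_omega_def)
qed

lemma mu_omega_fixed: "mu (mu_omega a) = mu_omega a"
proof
  fix n
  define K where "K = Suc n"
  have nK: "n < 2^K" unfolding K_def by (rule less_two_power_Suc)
  have "mu_omega a n = mu_iter (Suc K) a ! n" using nK by (intro mu_omega_mu_iter) simp
  also have "\<dots> = mu_list (mu_iter K a) ! n" by simp
  also have "\<dots> = (if even n then mu_iter K a ! (n div 2) else \<not> mu_iter K a ! (n div 2))"
    using nK by (intro nth_mu_list) (simp add: length_mu_iter)
  also have "\<dots> = mu (mu_omega a) n"
    using mu_omega_mu_iter[of "n div 2" K a] nK by (simp add: mu_def)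
  finally show "mu (mu_omega a) n = mu_omega a n" by simp
qed

lemma mu_omega_True: "mu_omega True n = (\<not> mu_omega False n)"
  using mu_iter_Not[of "Suc n" False] length_mu_iter[of "Suc n" False] less_two_power_Suc[of n]
  by (simp add: mu_omega_def)

lemma mu_thue: "mu thue = thue" by (simp add: thue_def mu_omega_fixed)
lemma mu_thue_bar: "mu thue_bar = thue_bar" by (simp add: thue_bar_def mu_omega_fixed)
lemma thue_bar_Not: "thue_bar n = (\<not> thue n)" by (simp add: thue_def thue_bar_def mu_omega_True)
lemma thue_0: "thue 0 = False" by (simp add: thue_def mu_omega_def)
lemma thue_bar_0: "thue_bar 0 = True" by (simp add: thue_bar_Not thue_0)
lemma thue_neq_thue_bar: "thue \<noteq> thue_bar" using thue_0 thue_bar_0 by auto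

text \<open>A word that can be desubstituted by mu forever is t or its complement: letter n of
  each y_j is the first letter of y_j xor t n, by induction on n.\<close>

lemma mu_chain_tail:
  assumes h: "\<And>j. j \<ge> m \<Longrightarrow> ys j = mu (ys (Suc j))"
  shows "ys m = thue \<or> ys m = thue_bar"
proof -
  have xor: "\<forall>j\<ge>m. ys j n = (ys j 0 \<noteq> thue n)" for n
  proof (induction n rule: less_induct)
    case (less n)
    show ?case
    proof (intro allI impI)
      fix j assume j: "j \<ge> m"
      show "ys j n = (ys j 0 \<noteq> thue n)"
      proof (cases "n = 0")
        case False
        have first: "ys j 0 = ys (Suc j) 0" using h[OF j] by (metis mu_even mult_0_right)
        have "ys j n = (if even n then ys (Suc j) (n div 2) else \<not> ys (Suc j) (n div 2))"
          using h[OF j] by (simp add: mu_def)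
        also have "\<dots> = (ys j 0 \<noteq> mu thue n)"
          using less.IH[of "n div 2"] False j first by (auto simp: mu_def)
        finally show ?thesis by (simp add: mu_thue)
      qed (simp add: thue_0)
    qed
  qed
  have "ys m n = (ys m 0 \<noteq> thue n)" for n using xor[of n] by blast
  then show ?thesis by (cases "ys m 0") (auto simp: fun_eq_iff thue_bar_Not)
qed

section \<open>Codes and runs\<close>

lemma chain_step: "code_chain i ys \<Longrightarrow> ys j = conc (pref (i (Suc j))) (mu (ys (Suc j)))"
  unfolding code_chain_def by (erule allE[of _ "Suc j"]) simp

lemma chain_intro:
  "(\<And>j. ys j = conc (pref (i (Suc j))) (mu (ys (Suc j)))) \<Longrightarrow> code_chain i ys"
  unfolding code_chain_def
proof (intro allI impI)
  fix j :: nat assume h: "\<And>j. ys j = conc (pref (i (Suc j))) (mu (ys (Suc j)))" and "1 \<le> j"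
  then obtain j' where "j = Suc j'" by (cases j) auto
  then show "ys (j - 1) = conc (pref (i j)) (mu (ys j))" using h[of j'] by simp
qed

lemma run_step: "run_from_A i s \<Longrightarrow> delta (s j) (i (Suc j)) = Some (s (Suc j))"
  by (simp add: run_from_A_def)

lemma run_label_lt5: "run_from_A i s \<Longrightarrow> j \<ge> 1 \<Longrightarrow> i j < 5"
  using delta_label_lt5[OF run_step, of i s "j - 1"] by simp

lemma run_labels: "run_from_A i s \<Longrightarrow> \<forall>j\<ge>1. i j \<in> {0..4}"
  using run_label_lt5 by fastforce

subsection \<open>Codes of overlap-free words label runs\<close>

primrec greedy_run :: "(nat \<Rightarrow> nat) \<Rightarrow> nat \<Rightarrow> state" where
  "greedy_run i 0 = A"
| "greedy_run i (Suc j) = (case delta (greedy_run i j) (i (Suc j)) of Some q \<Rightarrow> q | None \<Rightarrow> A)"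

lemma code_gives_run:
  assumes ch: "code_chain i ys" and lt: "\<And>j. j \<ge> 1 \<Longrightarrow> i j < 5" and x: "ys 0 \<in> OF"
  shows "run_from_A i (greedy_run i)"
proof -
  have step: "delta (greedy_run i j) (i (Suc j)) = Some (greedy_run i (Suc j))"
    if "admissible (greedy_run i j) (ys j)" for j
  proof -
    have "admissible (greedy_run i j) (conc (pref (i (Suc j))) (mu (ys (Suc j))))"
      using that chain_step[OF ch, of j] by simp
    then have "\<exists>q'. delta (greedy_run i j) (i (Suc j)) = Some q'"
      using lt[of "Suc j"] by (intro admissible_has_transition) simp_all
    then show ?thesis by auto
  qed
  have adm: "admissible (greedy_run i j) (ys j)" for j
  proof (induction j)
    case 0 then show ?case using x by (simp add: admissible_A_iff_OF)
  next
    case (Suc j)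
    then show ?case using admissible_step[OF step[OF Suc]] chain_step[OF ch, of j] by simp
  qed
  show ?thesis using step adm by (simp add: run_from_A_def)
qed

subsection \<open>Overlap-freeness of the coded words\<close>

lemma admissible_along_run:
  assumes r: "run_from_A i s" and ch: "code_chain i ys" and x: "ys 0 \<in> OF"
  shows "admissible (s j) (ys j)"
proof (induction j)
  case 0 then show ?case using x r by (simp add: run_from_A_def admissible_A_iff_OF)
next
  case (Suc j)
  then show ?case using admissible_step[OF run_step[OF r]] chain_step[OF ch, of j] by simp
qed

text \<open>If no y_j has a forbidden prefix at s_j, then x is overlap-free: an overlap would
  descend along the code with strictly decreasing periods.\<close>

lemma OF_if_never_forbidden:
  assumes r: "run_from_A i s" and ch: "code_chain i ys"
    and nf: "\<And>j. \<not> has_forbidden_prefix (s j) (ys j)"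
  shows "ys 0 \<in> OF"
proof -
  have "\<forall>j i'. \<not> overlap_at (conc (ctx (s j)) (ys j)) i' P" for P
  proof (induction P rule: less_induct)
    case (less P)
    show ?case
    proof (intro allI notI)
      fix j i' assume "overlap_at (conc (ctx (s j)) (ys j)) i' P"
      then have "overlap_at (conc (ctx (s j)) (conc (pref (i (Suc j))) (mu (ys (Suc j))))) i' P"
        using chain_step[OF ch, of j] by simp
      from overlap_descent_step[OF run_step[OF r] this]
      show False using less.IH nf by blast
    qed
  qed
  then have "\<forall>i' P. \<not> overlap_at (conc (ctx (s 0)) (ys 0)) i' P" by blast
  then show ?thesis using r by (simp add: OF_iff_no_overlap_at run_from_A_def)
qed

definition forbidden_within :: "state \<Rightarrow> iword \<Rightarrow> nat \<Rightarrow> bool" where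
  "forbidden_within q z L \<longleftrightarrow>
     (\<exists>f\<in>set (forbidden_prefixes q). length f \<le> L \<and> (\<forall>m<length f. z m = f!m))"

lemma forbidden_within_step:
  assumes r: "run_from_A i s" and ch: "code_chain i ys" and fl: "forbidden_within (s j) (ys j) L"
  shows "forbidden_within (s (Suc j)) (ys (Suc j)) L"
    and "i (Suc j) \<noteq> 0 \<Longrightarrow> forbidden_within (s (Suc j)) (ys (Suc j)) (L - 1)"
proof -
  obtain f where f: "f \<in> set (forbidden_prefixes (s j))" "length f \<le> L" "\<forall>m<length f. ys j m = f!m"
    using fl by (auto simp: forbidden_within_def)
  have "\<forall>m<length f. conc (pref (i (Suc j))) (mu (ys (Suc j))) m = f!m"
    using f(3) chain_step[OF ch, of j] by simp
  from forbidden_prefix_step[OF run_step[OF r] f(1) this]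
  obtain g where g: "g \<in> set (forbidden_prefixes (s (Suc j)))" "\<forall>m<length g. ys (Suc j) m = g!m"
    "length g \<le> length f" "i (Suc j) \<noteq> 0 \<longrightarrow> length g < length f" by blast
  show "forbidden_within (s (Suc j)) (ys (Suc j)) L"
    unfolding forbidden_within_def by (intro bexI[OF _ g(1)]) (use g(2,3) f(2) in auto)
  show "forbidden_within (s (Suc j)) (ys (Suc j)) (L - 1)" if "i (Suc j) \<noteq> 0"
    unfolding forbidden_within_def by (intro bexI[OF _ g(1)]) (use g(2,4) f(2) that in auto)
qed

lemma forbidden_within_later:
  assumes r: "run_from_A i s" and ch: "code_chain i ys" and fl: "forbidden_within (s j) (ys j) L"
  shows "forbidden_within (s (j + d)) (ys (j + d)) L"
proof (induction d)
  case (Suc d)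
  then show ?case using forbidden_within_step(1)[OF r ch, of "j + d" L] by simp
qed (simp add: fl)

lemma forbidden_within_iff: "has_forbidden_prefix q z \<longleftrightarrow> forbidden_within q z 3"
  unfolding forbidden_within_def has_forbidden_prefix_def
  using forbidden_prefix_length[of _ q] by blast

text \<open>With infinitely many nonzero labels, a forbidden prefix would shrink to length 0.\<close>

lemma never_forbidden_if_infinitely_nonzero:
  assumes r: "run_from_A i s" and ch: "code_chain i ys" and nz: "\<And>c. \<exists>j\<ge>c. i j \<noteq> 0"
  shows "\<not> has_forbidden_prefix (s j) (ys j)"
proof -
  have "\<forall>j. \<not> forbidden_within (s j) (ys j) L" for L
  proof (induction L)
    case 0 then show ?case
      using forbidden_prefix_length by (fastforce simp: forbidden_within_def)
  next
    case (Suc L)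
    show ?case
    proof (intro allI notI)
      fix j assume fl: "forbidden_within (s j) (ys j) (Suc L)"
      obtain j' where j': "j' \<ge> Suc j" "i j' \<noteq> 0" using nz by blast
      define d where "d = j' - Suc j"
      have d: "j' = Suc (j + d)" using j'(1) by (simp add: d_def)
      have "forbidden_within (s (j + d)) (ys (j + d)) (Suc L)"
        by (rule forbidden_within_later[OF r ch fl])
      from forbidden_within_step(2)[OF r ch this]
      have "forbidden_within (s (Suc (j + d))) (ys (Suc (j + d))) L" using j'(2) d by simp
      then show False using Suc.IH by blast
    qed
  qed
  then show ?thesis using forbidden_within_iff by blast
qed

text \<open>A forbidden prefix persists along the run, so it is absent everywhere as soon as it is
  absent from some point on.\<close>

lemma never_forbidden_if_eventually_never:
  assumes r: "run_from_A i s" and ch: "code_chain i ys"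
    and t: "\<And>j. j \<ge> m \<Longrightarrow> \<not> has_forbidden_prefix (s j) (ys j)"
  shows "\<not> has_forbidden_prefix (s j) (ys j)"
proof
  assume "has_forbidden_prefix (s j) (ys j)"
  then have "forbidden_within (s j) (ys j) 3" by (simp add: forbidden_within_iff)
  then have "forbidden_within (s (j + m)) (ys (j + m)) 3" by (rule forbidden_within_later[OF r ch])
  then show False using t[of "j + m"] forbidden_within_iff by simp
qed

subsection \<open>Sequences that are not eventually zero code exactly one word\<close>

text \<open>Nonzero labels fix the first letter of y_j: it is the first letter of the first
  nonempty prefix p_(i_k) with k > j.\<close>

definition first_letter :: "(nat \<Rightarrow> nat) \<Rightarrow> nat \<Rightarrow> bool" where
  "first_letter i j = hd (pref (i (LEAST k. j < k \<and> pref (i k) \<noteq> [])))"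

lemma first_letter_nonempty: "pref (i (Suc j)) \<noteq> [] \<Longrightarrow> first_letter i j = hd (pref (i (Suc j)))"
proof -
  assume h: "pref (i (Suc j)) \<noteq> []"
  have "(LEAST k. j < k \<and> pref (i k) \<noteq> []) = Suc j"
    by (rule Least_equality) (use h in auto)
  then show ?thesis by (simp add: first_letter_def)
qed

lemma first_letter_empty: "pref (i (Suc j)) = [] \<Longrightarrow> first_letter i j = first_letter i (Suc j)"
proof -
  assume h: "pref (i (Suc j)) = []"
  have "(\<lambda>k. j < k \<and> pref (i k) \<noteq> []) = (\<lambda>k. Suc j < k \<and> pref (i k) \<noteq> [])"
  proof
    fix k show "(j < k \<and> pref (i k) \<noteq> []) = (Suc j < k \<and> pref (i k) \<noteq> [])"
      using h by (cases "k = Suc j") auto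
  qed
  then show ?thesis by (simp add: first_letter_def)
qed

function decoded :: "(nat \<Rightarrow> nat) \<Rightarrow> nat \<Rightarrow> nat \<Rightarrow> bool" where
  "decoded i j n = (if n < length (pref (i (Suc j))) then pref (i (Suc j)) ! n
     else if n = 0 then first_letter i j
     else if even (n - length (pref (i (Suc j)))) then decoded i (Suc j) ((n - length (pref (i (Suc j)))) div 2)
     else \<not> decoded i (Suc j) ((n - length (pref (i (Suc j)))) div 2))"
  by pat_completeness auto
termination by (relation "measure (\<lambda>(i, j, n). n)") auto

declare decoded.simps[simp del]

lemma decoded_0: "decoded i j 0 = first_letter i j"
  by (subst decoded.simps) (auto simp: first_letter_nonempty hd_conv_nth)

lemma decoded_step: "decoded i j = conc (pref (i (Suc j))) (mu (decoded i (Suc j)))"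
proof
  fix n
  show "decoded i j n = conc (pref (i (Suc j))) (mu (decoded i (Suc j))) n"
  proof (cases "n < length (pref (i (Suc j))) \<or> n \<noteq> 0")
    case True then show ?thesis by (subst decoded.simps) (auto simp: conc_def mu_def)
  next
    case False
    then have "n = 0" "pref (i (Suc j)) = []" by auto
    then show ?thesis using first_letter_empty[of i j] by (simp add: decoded_0 conc_def mu_def)
  qed
qed

lemma decoded_chain: "code_chain i (decoded i)"
  by (rule chain_intro) (rule decoded_step)

lemma chain_first_letter:
  assumes ch: "code_chain i ys" and ne: "pref (i (Suc (j + d))) \<noteq> []"
  shows "ys j 0 = first_letter i j"
  using ne
proof (induction d arbitrary: j)
  case 0
  then show ?case
    using chain_step[OF ch, of j] by (simp add: conc_def first_letter_nonempty hd_conv_nth)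
next
  case (Suc d)
  show ?case
  proof (cases "pref (i (Suc j)) = []")
    case True
    have "ys (Suc j) 0 = first_letter i (Suc j)" using Suc.IH[of "Suc j"] Suc.prems by simp
    then show ?thesis
      using chain_step[OF ch, of j] True first_letter_empty[of i j, OF True] by (simp add: conc_def mu_def)
  next
    case False
    then show ?thesis
      using chain_step[OF ch, of j] by (simp add: conc_def first_letter_nonempty hd_conv_nth)
  qed
qed

lemma chain_determined:
  assumes ch: "code_chain i ys" and nz: "\<And>j. \<exists>k>j. pref (i k) \<noteq> []"
  shows "ys j = decoded i j"
proof
  fix n show "ys j n = decoded i j n"
  proof (induction n arbitrary: j rule: less_induct)
    case (less n)
    have ys: "ys j = conc (pref (i (Suc j))) (mu (ys (Suc j)))" by (rule chain_step[OF ch])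
    show ?case
    proof (cases "n < length (pref (i (Suc j))) \<or> n \<noteq> 0")
      case True
      then show ?thesis using ys less.IH[of "(n - length (pref (i (Suc j)))) div 2"]
        by (subst decoded.simps) (auto simp: conc_def mu_def)
    next
      case False
      obtain k where k: "k > j" "pref (i k) \<noteq> []" using nz by blast
      then have "pref (i (Suc (j + (k - Suc j)))) \<noteq> []" by simp
      then show ?thesis using False chain_first_letter[OF ch] decoded_0 by auto
    qed
  qed
qed

lemma pref_nonempty: "0 < n \<Longrightarrow> n < 5 \<Longrightarrow> pref n \<noteq> []"
proof -
  assume "0 < n" "n < 5"
  then have "n = Suc 0 \<or> n = Suc (Suc 0) \<or> n = Suc (Suc (Suc 0)) \<or> n = Suc (Suc (Suc (Suc 0)))"
    by arith
  then show ?thesis by auto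
qed

lemma not_eventually_zero_case:
  assumes r: "run_from_A i s" and nz: "\<not> (\<exists>c\<ge>1. \<forall>j\<ge>c. i j = 0)"
  shows "(\<exists>!x. codes i x) \<and> (\<forall>x. codes i x \<longrightarrow> x \<in> OF)"
proof -
  have nonzero: "\<exists>j\<ge>c. i j \<noteq> 0" for c
  proof -
    obtain j where "j \<ge> Suc c" "i j \<noteq> 0" using nz by auto
    then show ?thesis by (intro exI[of _ j]) simp
  qed
  have "\<exists>k>j. pref (i k) \<noteq> []" for j
  proof -
    obtain k where k: "k \<ge> Suc j" "i k \<noteq> 0" using nonzero by blast
    then have "pref (i k) \<noteq> []" using pref_nonempty run_label_lt5[OF r, of k] by simp
    then show ?thesis using k by (intro exI[of _ k]) simp
  qed
  then have unique: "x = decoded i 0" if "codes i x" for x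
    using that chain_determined by (auto simp: codes_def)
  have "codes i (decoded i 0)" using decoded_chain run_labels[OF r] by (auto simp: codes_def)
  moreover have "x \<in> OF" if cx: "codes i x" for x
  proof -
    obtain ys where ys: "ys 0 = x" "code_chain i ys" using cx by (auto simp: codes_def)
    show ?thesis
      using OF_if_never_forbidden[OF r ys(2)] never_forbidden_if_infinitely_nonzero[OF r ys(2) nonzero] ys(1)
      by blast
  qed
  ultimately show ?thesis using unique by blast
qed

subsection \<open>Eventually zero sequences code exactly two words\<close>

fun unfold_chain :: "(nat \<Rightarrow> nat) \<Rightarrow> iword \<Rightarrow> nat \<Rightarrow> nat \<Rightarrow> iword" where
  "unfold_chain i T j 0 = T"
| "unfold_chain i T j (Suc d) = conc (pref (i (Suc j))) (mu (unfold_chain i T (Suc j) d))"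

definition tail_chain :: "(nat \<Rightarrow> nat) \<Rightarrow> nat \<Rightarrow> iword \<Rightarrow> nat \<Rightarrow> iword" where
  "tail_chain i m T j = (if j \<le> m then unfold_chain i T j (m - j) else T)"

lemma tail_chain_tail: "j \<ge> m \<Longrightarrow> tail_chain i m T j = T"
  by (auto simp: tail_chain_def)

lemma tail_chain_code_chain:
  assumes T: "mu T = T" and z: "\<And>j. j > m \<Longrightarrow> i j = 0"
  shows "code_chain i (tail_chain i m T)"
proof (rule chain_intro)
  fix j
  show "tail_chain i m T j = conc (pref (i (Suc j))) (mu (tail_chain i m T (Suc j)))"
  proof (cases "j < m")
    case True
    then have "m - j = Suc (m - Suc j)" by simp
    then show ?thesis using True by (simp add: tail_chain_def)
  next
    case False
    then show ?thesis using tail_chain_tail[of m j] tail_chain_tail[of m "Suc j"] z[of "Suc j"] T by simp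
  qed
qed

lemma conc_mu_inj: "conc p (mu X) = conc p (mu Y) \<Longrightarrow> X = Y"
proof
  fix n assume "conc p (mu X) = conc p (mu Y)"
  then have "conc p (mu X) (length p + 2*n) = conc p (mu Y) (length p + 2*n)" by simp
  then show "X n = Y n" by (simp add: conc_def)
qed

lemma unfold_chain_inj: "unfold_chain i T1 j d = unfold_chain i T2 j d \<Longrightarrow> T1 = T2"
  by (induction d arbitrary: j) (auto dest: conc_mu_inj)

lemma chain_unfold:
  assumes ch: "code_chain i ys"
  shows "ys j = unfold_chain i (ys (j + d)) j d"
proof (induction d arbitrary: j)
  case (Suc d)
  have IH: "ys (Suc j) = unfold_chain i (ys (j + Suc d)) (Suc j) d"
    using Suc.IH[of "Suc j"] by simp
  show ?case by (subst chain_step[OF ch, of j], subst IH) simp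
qed simp

text \<open>Beyond m the chain is desubstituted by mu forever, so y_m is t or its complement,
  and each choice gives exactly one coded word.\<close>

lemma eventually_zero_coded_words:
  assumes labels: "\<forall>j\<ge>1. i j \<in> {0..4}" and z: "\<And>j. j > m \<Longrightarrow> i j = 0"
  shows "tail_chain i m thue 0 \<noteq> tail_chain i m thue_bar 0"
    and "{x. codes i x} = {tail_chain i m thue 0, tail_chain i m thue_bar 0}"
    and "codes_with_tail i (tail_chain i m thue 0) m thue"
    and "codes_with_tail i (tail_chain i m thue_bar 0) m thue_bar"
proof -
  have ch: "code_chain i (tail_chain i m thue)" "code_chain i (tail_chain i m thue_bar)"
    using tail_chain_code_chain[of thue m i, OF mu_thue z]
      tail_chain_code_chain[of thue_bar m i, OF mu_thue_bar z] by blast+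
  show "tail_chain i m thue 0 \<noteq> tail_chain i m thue_bar 0"
  proof
    assume "tail_chain i m thue 0 = tail_chain i m thue_bar 0"
    then have "unfold_chain i thue 0 m = unfold_chain i thue_bar 0 m" by (simp add: tail_chain_def)
    then show False using unfold_chain_inj thue_neq_thue_bar by blast
  qed
  show "codes_with_tail i (tail_chain i m thue 0) m thue"
    "codes_with_tail i (tail_chain i m thue_bar 0) m thue_bar"
    unfolding codes_with_tail_def
    by (intro exI[of _ "tail_chain i m thue"] exI[of _ "tail_chain i m thue_bar"]
          conjI refl ch tail_chain_tail order_refl)+
  have rebuilt: "x = tail_chain i m (ys m) 0" if ch: "code_chain i ys" and x: "ys 0 = x" for ys x
  proof -
    have "ys 0 = unfold_chain i (ys m) 0 m" using chain_unfold[OF ch, of 0 m] by simp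
    then show ?thesis using x by (simp add: tail_chain_def)
  qed
  have tail: "ys m = thue \<or> ys m = thue_bar" if ch: "code_chain i ys" for ys
  proof (rule mu_chain_tail)
    fix j assume "j \<ge> m"
    then show "ys j = mu (ys (Suc j))" using chain_step[OF ch, of j] z[of "Suc j"] by simp
  qed
  show "{x. codes i x} = {tail_chain i m thue 0, tail_chain i m thue_bar 0}"
  proof (intro equalityI subsetI)
    fix x assume "x \<in> {x. codes i x}"
    then obtain ys where "code_chain i ys" "ys 0 = x" by (auto simp: codes_def)
    then show "x \<in> {tail_chain i m thue 0, tail_chain i m thue_bar 0}"
      using rebuilt tail by fastforce
  next
    fix x assume "x \<in> {tail_chain i m thue 0, tail_chain i m thue_bar 0}"
    then show "x \<in> {x. codes i x}" using ch labels by (auto simp: codes_def)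
  qed
qed

text \<open>Overlap-freeness of such a word is decided by the forbidden prefixes of the final
  states: none at all, or a single forbidden first letter b.\<close>

lemma OF_if_tail_unrestricted:
  assumes r: "run_from_A i s" and ch: "code_chain i Y"
    and fb: "\<And>j. j \<ge> m \<Longrightarrow> forbidden_prefixes (s j) = []"
  shows "Y 0 \<in> OF"
proof (rule OF_if_never_forbidden[OF r ch])
  fix j
  have "\<not> has_forbidden_prefix (s j) (Y j)" if "j \<ge> m" for j
    using has_forbidden_prefix_none[OF fb[OF that]] .
  then show "\<not> has_forbidden_prefix (s j) (Y j)" by (rule never_forbidden_if_eventually_never[OF r ch])
qed

lemma OF_iff_tail_letter:
  assumes r: "run_from_A i s" and ch: "code_chain i Y"
    and tail: "\<And>j. j \<ge> m \<Longrightarrow> Y j = w"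
    and fb: "\<And>j. j \<ge> m \<Longrightarrow> forbidden_prefixes (s j) = [[b]]"
  shows "Y 0 \<in> OF \<longleftrightarrow> w 0 \<noteq> b"
proof
  assume "Y 0 \<in> OF"
  then have "\<not> has_forbidden_prefix (s m) (Y m)"
    using admissible_along_run[OF r ch] by (simp add: admissible_def)
  then show "w 0 \<noteq> b" using has_forbidden_prefix_single[OF fb] tail by simp
next
  assume "w 0 \<noteq> b"
  then have "\<not> has_forbidden_prefix (s j) (Y j)" if "j \<ge> m" for j
    using has_forbidden_prefix_single[OF fb[OF that]] tail[OF that] by simp
  then have "\<not> has_forbidden_prefix (s j) (Y j)" for j
    by (rule never_forbidden_if_eventually_never[OF r ch])
  then show "Y 0 \<in> OF" by (rule OF_if_never_forbidden[OF r ch])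
qed

lemma eventually_zero_case:
  assumes r: "run_from_A i s" and c: "c \<ge> 1" and z: "\<forall>j\<ge>c. i j = 0"
  shows "\<exists>x1 x2. x1 \<noteq> x2 \<and> {x. codes i x} = {x1, x2}
              \<and> codes_with_tail i x1 (c - 1) thue
              \<and> codes_with_tail i x2 (c - 1) thue_bar
              \<and> (((\<forall>j\<ge>c - 1. s j = A) \<or> (\<forall>j\<ge>c - 1. s j \<in> {B, D}))
                    \<longrightarrow> x1 \<in> OF \<and> x2 \<in> OF)
              \<and> ((\<forall>j\<ge>c - 1. s j \<in> {J, K}) \<longrightarrow> x1 \<in> OF \<and> x2 \<notin> OF)
              \<and> ((\<forall>j\<ge>c - 1. s j \<in> {G, H}) \<longrightarrow> x1 \<notin> OF \<and> x2 \<in> OF)"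
proof -
  define m where "m = c - 1"
  have zm: "\<And>j. j > m \<Longrightarrow> i j = 0" using z c by (simp add: m_def)
  let ?Y1 = "tail_chain i m thue" and ?Y2 = "tail_chain i m thue_bar"
  have ch1: "code_chain i ?Y1" by (rule tail_chain_code_chain[OF mu_thue zm])
  have ch2: "code_chain i ?Y2" by (rule tail_chain_code_chain[OF mu_thue_bar zm])
  have letter: "?Y1 0 \<in> OF \<longleftrightarrow> b" "?Y2 0 \<in> OF \<longleftrightarrow> \<not> b"
    if "\<forall>j\<ge>m. forbidden_prefixes (s j) = [[b]]" for b
  proof -
    have fb: "\<And>j. j \<ge> m \<Longrightarrow> forbidden_prefixes (s j) = [[b]]" using that by blast
    have "?Y1 0 \<in> OF \<longleftrightarrow> thue 0 \<noteq> b"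
      by (rule OF_iff_tail_letter[OF r ch1 _ fb]) (rule tail_chain_tail)
    moreover have "?Y2 0 \<in> OF \<longleftrightarrow> thue_bar 0 \<noteq> b"
      by (rule OF_iff_tail_letter[OF r ch2 _ fb]) (rule tail_chain_tail)
    ultimately show "?Y1 0 \<in> OF \<longleftrightarrow> b" "?Y2 0 \<in> OF \<longleftrightarrow> \<not> b"
      by (simp_all add: thue_0 thue_bar_0)
  qed
  have AB: "((\<forall>j\<ge>m. s j = A) \<or> (\<forall>j\<ge>m. s j \<in> {B, D})) \<longrightarrow> ?Y1 0 \<in> OF \<and> ?Y2 0 \<in> OF"
  proof
    assume AB: "(\<forall>j\<ge>m. s j = A) \<or> (\<forall>j\<ge>m. s j \<in> {B, D})"
    have "forbidden_prefixes (s j) = []" if "j \<ge> m" for j using AB that by auto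
    then show "?Y1 0 \<in> OF \<and> ?Y2 0 \<in> OF"
      using OF_if_tail_unrestricted[OF r ch1] OF_if_tail_unrestricted[OF r ch2] by blast
  qed
  have JK: "(\<forall>j\<ge>m. s j \<in> {J, K}) \<longrightarrow> ?Y1 0 \<in> OF \<and> ?Y2 0 \<notin> OF"
  proof
    assume "\<forall>j\<ge>m. s j \<in> {J, K}"
    then have "\<forall>j\<ge>m. forbidden_prefixes (s j) = [[True]]" by auto
    then show "?Y1 0 \<in> OF \<and> ?Y2 0 \<notin> OF" using letter by blast
  qed
  have GH: "(\<forall>j\<ge>m. s j \<in> {G, H}) \<longrightarrow> ?Y1 0 \<notin> OF \<and> ?Y2 0 \<in> OF"
  proof
    assume "\<forall>j\<ge>m. s j \<in> {G, H}"
    then have "\<forall>j\<ge>m. forbidden_prefixes (s j) = [[False]]" by auto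
    then show "?Y1 0 \<notin> OF \<and> ?Y2 0 \<in> OF" using letter by blast
  qed
  note words = eventually_zero_coded_words[OF run_labels[OF r] zm]
  show ?thesis unfolding m_def[symmetric]
    by (rule exI[of _ "?Y1 0"], rule exI[of _ "?Y2 0"], insert words AB JK GH, intro conjI)
       assumption+
qed

theorem theorem3:
  shows "(\<forall>x i. x \<in> OF \<and> is_code_of x i \<longrightarrow> path_label_from_A i)
   \<and> (\<forall>i s. run_from_A i s \<longrightarrow>
        ((\<not> (\<exists>c\<ge>1. \<forall>j\<ge>c. i j = 0)) \<longrightarrow>
            (\<exists>!x. codes i x) \<and> (\<forall>x. codes i x \<longrightarrow> x \<in> OF))
      \<and> (\<forall>c\<ge>1. (\<forall>j\<ge>c. i j = 0) \<longrightarrow>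
           (\<exists>x1 x2. x1 \<noteq> x2 \<and> {x. codes i x} = {x1, x2}
              \<and> codes_with_tail i x1 (c - 1) thue
              \<and> codes_with_tail i x2 (c - 1) thue_bar
              \<and> (((\<forall>j\<ge>c - 1. s j = A) \<or> (\<forall>j\<ge>c - 1. s j \<in> {B, D}))
                    \<longrightarrow> x1 \<in> OF \<and> x2 \<in> OF)
              \<and> ((\<forall>j\<ge>c - 1. s j \<in> {J, K}) \<longrightarrow> x1 \<in> OF \<and> x2 \<notin> OF)
              \<and> ((\<forall>j\<ge>c - 1. s j \<in> {G, H}) \<longrightarrow> x1 \<notin> OF \<and> x2 \<in> OF))))"
proof (intro conjI allI impI)
  fix x i assume "x \<in> OF \<and> is_code_of x i"
  then obtain ys where ys: "ys 0 \<in> OF" "code_chain i ys" and labels: "\<forall>j\<ge>1. i j \<in> {0..4}"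
    by (auto simp: is_code_of_def)
  have "\<And>j. j \<ge> 1 \<Longrightarrow> i j < 5" using labels by fastforce
  then have "run_from_A i (greedy_run i)" using code_gives_run ys by blast
  then show "path_label_from_A i" by (auto simp: path_label_from_A_def)
next
  fix i s assume "run_from_A i s" "\<not> (\<exists>c\<ge>1. \<forall>j\<ge>c. i j = 0)"
  then show "\<exists>!x. codes i x" using not_eventually_zero_case by blast
next
  fix i s x assume "run_from_A i s" "\<not> (\<exists>c\<ge>1. \<forall>j\<ge>c. i j = 0)" "codes i x"
  then show "x \<in> OF" using not_eventually_zero_case by blast
next
  fix i s c assume "run_from_A i s" "1 \<le> c" "\<forall>j\<ge>c. i j = 0"
  then show "\<exists>x1 x2. x1 \<noteq> x2 \<and> {x. codes i x} = {x1, x2}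
              \<and> codes_with_tail i x1 (c - 1) thue
              \<and> codes_with_tail i x2 (c - 1) thue_bar
              \<and> (((\<forall>j\<ge>c - 1. s j = A) \<or> (\<forall>j\<ge>c - 1. s j \<in> {B, D}))
                    \<longrightarrow> x1 \<in> OF \<and> x2 \<in> OF)
              \<and> ((\<forall>j\<ge>c - 1. s j \<in> {J, K}) \<longrightarrow> x1 \<in> OF \<and> x2 \<notin> OF)
              \<and> ((\<forall>j\<ge>c - 1. s j \<in> {G, H}) \<longrightarrow> x1 \<notin> OF \<and> x2 \<in> OF)"
    by (rule eventually_zero_case)
qed

end
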